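(* Let $B:(0,1)\times(0,1)\to\mathbb{R}$ be separately Lebesgue measurable (measurable in each variable when the other is fixed) and satisfy $$B(x,y)+(1-x)B\Big(\frac{u}{1-x},\frac{v}{1-y}\Big)=B(u,v)+(1-u)B\Big(\frac{x}{1-u},\frac{y}{1-v}\Big)$$ for all $x,y,u,v$ with $x,y,u,v,x+u,y+v\in(0,1)$, together with $B(x,y)=B(1-x,1-y)$ and $B(x,x)=0$ for all $x,y\in(0,1)$. Then there exists $c\in\mathbb{R}$ such that $$B(x,y)=c\Big(x\log\frac{x}{y}+(1-x)\log\frac{1-x}{1-y}\Big),\qquad x,y\in(0,1).$$
   Context: $\log$ is the natural logarithm. *)

theory Defs
  imports "HOL-Analysis.Analysis"
begin

end

theory Submission
  imports Defs
begin

text \<open>In homogeneous form \<open>persp a \<alpha> b \<beta> = (a + b) * B (a / (a + b)) (\<alpha> / (\<alpha> + \<beta>))\<close> on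
  pairs of positive weights, the functional equation and the symmetry combine to a cocycle identity.
  For fixed second weights the difference of two of its instances is a homogeneous Pexider equation,
  whose solutions are linear; hence \<open>B x y - B x (1/2)\<close> is affine in \<open>x\<close>, and \<open>B x x = 0\<close> turns
  this into \<open>B x y = (A y - A x) * x + C y - C x\<close>. Substituting back gives
  \<open>A (y / (1 - v)) - A y = - C (v / (1 - y))\<close> after absorbing a constant into \<open>C\<close>. In logistic
  coordinates \<open>y = e\<^sup>t / (1 + e\<^sup>t)\<close> this makes \<open>A\<close> additive up to a constant; \<open>A\<close> is measurable
  because it is a combination of \<open>B (1/2)\<close> and \<open>B (1/4)\<close>, so by Steinhaus' theorem it is linear in
  \<open>t\<close>: \<open>A = A (1/2) + \<kappa> * logit\<close> and \<open>C w = \<kappa> * ln (1 - w)\<close>, which is \<open>- \<kappa>\<close> times the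
  Kullback-Leibler expression.\<close>

section \<open>Cauchy's equation for measurable functions\<close>

lemma Steinhaus_compact:
  fixes K :: "'a::euclidean_space set"
  assumes "compact K" and "measure lebesgue K > 0"
  obtains e where "e > 0" "\<And>t. norm t < e \<Longrightarrow> \<exists>x\<in>K. \<exists>y\<in>K. x = t + y"
proof -
  txt \<open>An open \<open>U \<supseteq> K\<close> with \<open>measure U < 2 * measure K\<close> contains all small translates of \<open>K\<close>,
    which therefore cannot be disjoint from \<open>K\<close>.\<close>
  define k where "k = measure lebesgue K"
  have K: "K \<in> lmeasurable"
    using \<open>compact K\<close> lmeasurable_compact by blast
  obtain U where U: "open U" "K \<subseteq> U" "U - K \<in> lmeasurable" "emeasure lebesgue (U - K) < ennreal k"
    using sets_lebesgue_outer_open[OF fmeasurableD[OF K]] assms(2) k_def by metis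
  have U_eq: "U = K \<union> (U - K)"
    using U(2) by auto
  have "measure lebesgue (U - K) < k"
    using U(3,4) by (simp add: emeasure_eq_measure2 ennreal_less_iff)
  then have U_small: "measure lebesgue U < 2 * k"
    using measure_Un_le[of K lebesgue "U - K"] K U(3) U_eq k_def by auto
  have "U \<in> lmeasurable"
    using K U(3) U_eq by (metis fmeasurable.Un)
  have "K \<inter> - U = {}"
    using U(2) by auto
  then obtain e where e: "e > 0" "\<And>x y. x \<in> K \<Longrightarrow> y \<in> - U \<Longrightarrow> e \<le> dist x y"
    using separate_compact_closed[OF \<open>compact K\<close>, of "- U"] U(1) by (auto simp: closed_Compl)
  show thesis
  proof (rule that[OF \<open>e > 0\<close>])
    fix t :: 'a
    assume t: "norm t < e"
    define K' where "K' = (+) t ` K"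
    have K'_sub: "K' \<subseteq> U"
      unfolding K'_def using e(2) t by (force simp: dist_norm)
    have "K \<inter> K' \<noteq> {}"
    proof
      assume "K \<inter> K' = {}"
      then have "measure lebesgue (K \<union> K') = 2 * k"
        using measure_Un3[OF K measurable_translation[OF K]] measure_translation k_def
        by (simp add: K'_def)
      moreover have "measure lebesgue (K \<union> K') \<le> measure lebesgue U"
        using K'_sub U(2) K measurable_translation[OF K] \<open>U \<in> lmeasurable\<close>
        by (intro measure_mono_fmeasurable) (auto simp: K'_def)
      ultimately show False
        using U_small by linarith
    qed
    then show "\<exists>x\<in>K. \<exists>y\<in>K. x = t + y"
      by (auto simp: K'_def)
  qed
qed

lemma Steinhaus:
  fixes S :: "'a::euclidean_space set"
  assumes S: "S \<in> sets lebesgue" "bounded S" and "\<not> negligible S"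
  obtains e where "e > 0" "\<And>t. norm t < e \<Longrightarrow> \<exists>x\<in>S. \<exists>y\<in>S. x = t + y"
proof -
  have "S \<in> lmeasurable"
    using S bounded_set_imp_lmeasurable by blast
  then have "measure lebesgue S \<noteq> 0"
    using \<open>\<not> negligible S\<close> negligible_iff_measure0 by blast
  then have "measure lebesgue S > 0"
    using measure_nonneg[of lebesgue S] by linarith
  then obtain K where K: "closed K" "K \<subseteq> S" "S - K \<in> lmeasurable"
      "emeasure lebesgue (S - K) < ennreal (measure lebesgue S)"
    by (rule sets_lebesgue_inner_closed[OF S(1)])
  have "compact K"
    using K(1,2) S(2) bounded_subset compact_eq_bounded_closed by blast
  have "measure lebesgue S \<le> measure lebesgue K + measure lebesgue (S - K)"
    using measure_Un_le[of K lebesgue "S - K"] lmeasurable_compact[OF \<open>compact K\<close>] K(2,3)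
    by (simp add: Un_absorb1)
  moreover have "measure lebesgue (S - K) < measure lebesgue S"
    using K(3,4) by (simp add: emeasure_eq_measure2 ennreal_less_iff)
  ultimately have "measure lebesgue K > 0"
    by linarith
  then obtain e where "e > 0" and e: "\<And>t. norm t < e \<Longrightarrow> \<exists>x\<in>K. \<exists>y\<in>K. x = t + y"
    using Steinhaus_compact[OF \<open>compact K\<close>] by blast
  show thesis
  proof (rule that[OF \<open>e > 0\<close>])
    fix t :: 'a
    assume "norm t < e"
    then show "\<exists>x\<in>S. \<exists>y\<in>S. x = t + y"
      using e K(2) by blast
  qed
qed

lemma additive_of_int_mult:
  fixes f :: "'a::ring_1 \<Rightarrow> 'b::ring_1"
  assumes "Modules.additive f"
  shows "f (of_int k * x) = of_int k * f x"
proof (induction k rule: int_induct[where k = 0])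
  case (step1 i)
  then show ?case
    using additive.add[OF assms, of "of_int i * x" x] by (simp add: distrib_right)
next
  case (step2 i)
  then show ?case
    using additive.diff[OF assms, of "of_int i * x" x] by (simp add: left_diff_distrib)
qed (simp add: additive.zero[OF assms])

lemma additive_Rats:
  fixes f :: "real \<Rightarrow> real"
  assumes "Modules.additive f" and "q \<in> \<rat>"
  shows "f q = q * f 1"
proof -
  obtain a b where ab: "b > 0" "q = of_int a / of_int b"
    using Rats_cases'[OF \<open>q \<in> \<rat>\<close>] by metis
  then have "of_int b * q = of_int a"
    by simp
  then have "of_int b * f q = of_int b * (q * f 1)"
    using additive_of_int_mult[OF assms(1), of b q] additive_of_int_mult[OF assms(1), of a 1]
    by simp
  then show ?thesis
    using ab(1) by simp
qed

lemma additive_locally_bounded_linear: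
  fixes f :: "real \<Rightarrow> real"
  assumes "Modules.additive f" and "d > 0" and bounded: "\<And>t. \<bar>t\<bar> < d \<Longrightarrow> \<bar>f t\<bar> \<le> M"
  shows "f x = f 1 * x"
proof -
  define g where "g t = f t - f 1 * t" for t
  have "Modules.additive g"
    using additive.add[OF assms(1)] by unfold_locales (simp add: g_def algebra_simps)
  have g_Rats: "g q = 0" if "q \<in> \<rat>" for q
    using additive_Rats[OF assms(1) that] by (simp add: g_def)
  txt \<open>Every real is within \<open>d\<close> of a rational, on which \<open>g\<close> vanishes, so \<open>g\<close> is bounded
    everywhere; together with \<open>g (n * x) = n * g x\<close> this forces \<open>g x = 0\<close>.\<close>
  have g_bounded: "\<bar>g y\<bar> \<le> M + \<bar>f 1\<bar> * d" for y
  proof -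
    obtain q where q: "q \<in> \<rat>" "y - d < q" "q < y"
      using Rats_dense_in_real[of "y - d" y] \<open>d > 0\<close> by auto
    have "g y = g (y - q)"
      using additive.add[OF \<open>Modules.additive g\<close>, of "y - q" q] g_Rats[OF q(1)] by simp
    moreover have "\<bar>f 1 * (y - q)\<bar> \<le> \<bar>f 1\<bar> * d"
      using q by (simp add: abs_mult mult_left_mono)
    ultimately show ?thesis
      using bounded[of "y - q"] q by (simp add: g_def)
  qed
  have "g x = 0"
  proof (rule ccontr)
    assume "g x \<noteq> 0"
    obtain n :: nat where n: "real n > (M + \<bar>f 1\<bar> * d) / \<bar>g x\<bar>"
      using reals_Archimedean2 by blast
    have "\<bar>g (of_int (int n) * x)\<bar> = real n * \<bar>g x\<bar>"
      using additive_of_int_mult[OF \<open>Modules.additive g\<close>, of "int n" x] by (simp add: abs_mult)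
    also have "\<dots> > M + \<bar>f 1\<bar> * d"
      using n \<open>g x \<noteq> 0\<close> by (simp add: field_simps)
    finally show False
      using g_bounded by (meson not_le)
  qed
  then show ?thesis
    by (simp add: g_def)
qed

lemma measurable_bounded_on_nonnegligible:
  fixes f :: "real \<Rightarrow> real"
  assumes "f \<in> borel_measurable lebesgue"
  obtains S M where "S \<in> sets lebesgue" "bounded S" "\<not> negligible S" "\<And>t. t \<in> S \<Longrightarrow> \<bar>f t\<bar> \<le> M"
proof -
  define S where "S n = {t \<in> {0..1}. \<bar>f t\<bar> \<le> real n}" for n
  have S_sets: "S n \<in> sets lebesgue" for n
  proof -
    have "{t \<in> space lebesgue. \<bar>f t\<bar> \<le> real n} \<in> sets lebesgue"
      using assms by measurable
    moreover have "S n = {0..1} \<inter> {t \<in> space lebesgue. \<bar>f t\<bar> \<le> real n}"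
      by (auto simp: S_def)
    ultimately show ?thesis
      by auto
  qed
  have "{0..1} \<subseteq> (\<Union>n. S n)"
  proof
    fix t :: real
    assume "t \<in> {0..1}"
    then have "t \<in> S (nat \<lceil>\<bar>f t\<bar>\<rceil>)"
      unfolding S_def using real_nat_ceiling_ge by blast
    then show "t \<in> (\<Union>n. S n)"
      by blast
  qed
  moreover have "\<not> negligible {0..1::real}"
    using negligible_interval(1)[of "0::real" 1] by simp
  ultimately obtain n where "\<not> negligible (S n)"
    using negligible_Union_nat[of S] negligible_subset by blast
  moreover have "bounded (S n)"
    by (rule bounded_subset[of "{0..1}"]) (auto simp: S_def)
  ultimately show thesis
    using that[OF S_sets] by (auto simp: S_def)
qed

lemma measurable_additive_linear:
  fixes f :: "real \<Rightarrow> real"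
  assumes "f \<in> borel_measurable lebesgue" and "Modules.additive f"
  shows "f x = f 1 * x"
proof -
  obtain S M where S: "S \<in> sets lebesgue" "bounded S" "\<not> negligible S"
    and M: "\<And>t. t \<in> S \<Longrightarrow> \<bar>f t\<bar> \<le> M"
    using measurable_bounded_on_nonnegligible[OF assms(1)] by blast
  then obtain e where "e > 0" and e: "\<And>t. norm t < e \<Longrightarrow> \<exists>x\<in>S. \<exists>y\<in>S. x = t + y"
    using Steinhaus by blast
  have bound: "\<bar>f t\<bar> \<le> 2 * M" if t: "\<bar>t\<bar> < e" for t
  proof -
    obtain x y where xy: "x \<in> S" "y \<in> S" "x = t + y"
      using e[of t] t by auto
    then have "f t = f x - f y"
      using additive.diff[OF assms(2), of x y] by simp
    then show ?thesis
      using M[OF xy(1)] M[OF xy(2)] by linarith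
  qed
  show ?thesis
    by (rule additive_locally_bounded_linear[OF assms(2) \<open>e > 0\<close> bound])
qed

lemma additive_if_increments_invariant:
  fixes f :: "real \<Rightarrow> real"
  assumes inc: "\<And>t s. s > 0 \<Longrightarrow> f (t + s) - f t = f s - f 0"
  shows "Modules.additive (\<lambda>t. f t - f 0)"
proof
  fix t s :: real
  consider "s > 0" | "s = 0" | "s < 0"
    by linarith
  then show "f (t + s) - f 0 = f t - f 0 + (f s - f 0)"
  proof cases
    case 1
    then show ?thesis
      using inc[of s t] by linarith
  next
    case 3
    then show ?thesis
      using inc[of "- s" "t + s"] inc[of "- s" s] by simp
  qed simp
qed

section \<open>Logistic coordinates\<close>

lemma borel_measurable_comp_inverse_differentiable:
  fixes A :: "'a::euclidean_space \<Rightarrow> 'b::euclidean_space" and g h :: "'a \<Rightarrow> 'a"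
  assumes A: "A \<in> borel_measurable (lebesgue_on S)" and S: "S \<in> sets lebesgue"
    and h: "h differentiable_on S"
    and g: "\<And>t. g t \<in> S" "\<And>t. h (g t) = t" "\<And>y. y \<in> S \<Longrightarrow> g (h y) = y"
  shows "(\<lambda>t. A (g t)) \<in> borel_measurable lebesgue"
proof -
  have "{t. A (g t) \<in> T} \<in> sets lebesgue" if "T \<in> sets borel" for T
  proof -
    have "{y \<in> S. A y \<in> T} \<in> sets lebesgue"
      using A S that borel_measurable_lebesgue_on_preimage_borel by blast
    then have "h ` {y \<in> S. A y \<in> T} \<in> sets lebesgue"
      using S h by (intro differentiable_image_in_sets_lebesgue) (auto intro: differentiable_on_subset)
    moreover have "h ` {y \<in> S. A y \<in> T} = {t. A (g t) \<in> T}"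
      using g by (auto intro!: image_eqI[where x = "g _"])
    ultimately show ?thesis
      by simp
  qed
  then show ?thesis
    using borel_measurable_lebesgue_on_preimage_borel[of UNIV "\<lambda>t. A (g t)"]
    by (simp add: lebesgue_on_UNIV_eq)
qed

definition logistic :: "real \<Rightarrow> real"
  where "logistic t = exp t / (1 + exp t)"

definition logit :: "real \<Rightarrow> real"
  where "logit y = ln y - ln (1 - y)"

lemma one_plus_exp_pos: "1 + exp (t::real) > 0"
  using exp_gt_zero[of t] by linarith

lemma logistic_in_unit_interval: "logistic t \<in> {0<..<1}"
  using one_plus_exp_pos[of t] by (simp add: logistic_def)

lemma one_minus_logistic: "1 - logistic t = 1 / (1 + exp t)"
  using one_plus_exp_pos[of t] by (simp add: logistic_def field_simps)

lemma logit_logistic [simp]: "logit (logistic t) = t"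
  using one_plus_exp_pos[of t]
  by (simp add: logit_def one_minus_logistic ln_div) (simp add: logistic_def ln_div)

lemma logistic_logit: "y \<in> {0<..<1} \<Longrightarrow> logistic (logit y) = y"
  by (auto simp: logistic_def logit_def exp_diff field_simps)

lemma logit_differentiable_on: "logit differentiable_on {0<..<1}"
proof (rule differentiable_at_imp_differentiable_on)
  fix y :: real
  assume "y \<in> {0<..<1}"
  then have "(logit has_real_derivative 1 / y + 1 / (1 - y)) (at y)"
    unfolding logit_def by (auto intro!: derivative_eq_intros)
  then show "logit differentiable at y"
    using real_differentiable_def by blast
qed

lemma logistic_add:
  "logistic (t + s) = logistic t / (1 - (1 - exp (- s)) * (1 - logistic t))"
proof -
  define E Q where "E = exp t" and "Q = exp s"
  have pos: "E > 0" "Q > 0"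
    by (simp_all add: E_def Q_def)
  then have nz: "1 + E \<noteq> 0" "1 + E * Q \<noteq> 0" "Q + E * Q \<noteq> 0"
    using mult_pos_pos[OF pos] by linarith+
  have eqs: "logistic t = E / (1 + E)" "logistic (t + s) = E * Q / (1 + E * Q)" "exp (- s) = 1 / Q"
    by (simp_all add: logistic_def E_def Q_def exp_add exp_minus inverse_eq_divide)
  have "1 - (1 - 1 / Q) * (1 - E / (1 + E)) = (1 + E * Q) / (Q * (1 + E))"
    using pos nz by (simp add: field_simps)
  moreover have "E / (1 + E) / ((1 + E * Q) / (Q * (1 + E))) = E / (1 + E) * (Q * (1 + E)) / (1 + E * Q)"
    by simp
  moreover have "E / (1 + E) * (Q * (1 + E)) = E * Q"
    using nz by simp
  ultimately show ?thesis
    unfolding eqs by simp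
qed

lemma borel_measurable_comp_logistic:
  fixes A :: "real \<Rightarrow> 'b::euclidean_space"
  shows "A \<in> borel_measurable (lebesgue_on {0<..<1}) \<Longrightarrow> (\<lambda>t. A (logistic t)) \<in> borel_measurable lebesgue"
  by (rule borel_measurable_comp_inverse_differentiable[where g = logistic and h = logit])
    (use logistic_in_unit_interval in \<open>auto simp: logistic_logit logit_differentiable_on\<close>)

lemma divide_in_unit_interval: "0 < p \<Longrightarrow> p < q \<Longrightarrow> p / q \<in> {0<..<1::real}"
  by simp

lemma cocycle_logistic_increment:
  fixes A C :: "real \<Rightarrow> real"
  assumes key: "\<And>y v. y \<in> {0<..<1} \<Longrightarrow> v \<in> {0<..<1} \<Longrightarrow> y + v \<in> {0<..<1} \<Longrightarrow>
      A (y / (1 - v)) - A y = - C (v / (1 - y))"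
    and "s > 0"
  shows "A (logistic (t + s)) - A (logistic t) = - C (1 - exp (- s))"
proof -
  define y w where "y = logistic t" and "w = 1 - exp (- s)"
  have y: "y \<in> {0<..<1}" and w: "w \<in> {0<..<1}"
    using \<open>s > 0\<close> logistic_in_unit_interval by (auto simp: y_def w_def)
  then have "0 < w * (1 - y)" "w * (1 - y) < 1 * (1 - y)"
    by (auto intro: mult_strict_right_mono)
  then have "A (y / (1 - w * (1 - y))) - A y = - C (w * (1 - y) / (1 - y))"
    using key[of y "w * (1 - y)"] y by simp
  moreover have "w * (1 - y) / (1 - y) = w" "logistic (t + s) = y / (1 - w * (1 - y))"
    using y by (simp_all add: y_def w_def logistic_add)
  ultimately show ?thesis
    by (simp add: y_def w_def)
qed

lemma logit_cocycle_measurable_solution: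
  fixes A C :: "real \<Rightarrow> real"
  assumes meas: "A \<in> borel_measurable (lebesgue_on {0<..<1})"
    and key: "\<And>y v. y \<in> {0<..<1} \<Longrightarrow> v \<in> {0<..<1} \<Longrightarrow> y + v \<in> {0<..<1} \<Longrightarrow>
      A (y / (1 - v)) - A y = - C (v / (1 - y))"
  obtains \<kappa> where "\<And>y. y \<in> {0<..<1} \<Longrightarrow> A y = A (1/2) + \<kappa> * logit y"
    and "\<And>w. w \<in> {0<..<1} \<Longrightarrow> C w = \<kappa> * ln (1 - w)"
proof -
  define f where "f t = A (logistic t)" for t
  have shift: "f (t + s) - f t = - C (1 - exp (- s))" if "s > 0" for t s
    unfolding f_def by (rule cocycle_logistic_increment[OF key that])
  have "Modules.additive (\<lambda>t. f t - f 0)"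
    using shift shift[of _ 0] by (intro additive_if_increments_invariant) simp
  moreover have "(\<lambda>t. f t - f 0) \<in> borel_measurable lebesgue"
    using borel_measurable_comp_logistic[OF meas] by (simp add: f_def)
  ultimately have f_linear: "f t - f 0 = (f 1 - f 0) * t" for t
    using measurable_additive_linear[of "\<lambda>t. f t - f 0"] by blast
  have f0: "f 0 = A (1/2)"
    by (simp add: f_def logistic_def)
  have A_logit: "A y = A (1/2) + (f 1 - f 0) * logit y" if "y \<in> {0<..<1}" for y
    using f_linear[of "logit y"] f0 that by (simp add: f_def logistic_logit)
  show thesis
  proof (rule that[OF A_logit])
    fix w :: real
    assume w: "w \<in> {0<..<1}"
    have "A ((1/2) / (1 - w / 2)) - A (1/2) = - C ((w / 2) / (1 - 1/2))"
      by (rule key) (use w in auto)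
    moreover have "(1/2) / (1 - w / 2) = 1 / (2 - w)" "(w / 2) / (1 - 1/2) = w"
      using w by (simp_all add: field_simps)
    ultimately have "A (1 / (2 - w)) - A (1/2) = - C w"
      by simp
    moreover have "logit (1 / (2 - w)) = - ln (1 - w)"
    proof -
      have "1 - 1 / (2 - w) = (1 - w) / (2 - w)"
        using w by (simp add: field_simps)
      then show ?thesis
        using w by (simp add: logit_def ln_div)
    qed
    moreover have "1 / (2 - w) \<in> {0<..<1}"
      using w by (auto intro!: divide_in_unit_interval)
    ultimately show "C w = (f 1 - f 0) * ln (1 - w)"
      using A_logit[of "1 / (2 - w)"] by simp
  qed
qed

section \<open>A homogeneous Pexider equation\<close>

lemma pexider_increment_invariant:
  fixes F G H :: "real \<Rightarrow> real \<Rightarrow> real"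
  assumes pex: "\<And>a b c. a > 0 \<Longrightarrow> b > 0 \<Longrightarrow> c > 0 \<Longrightarrow> F (a + b) c = G a (b + c) + H b c"
    and pos: "h > 0" "s > 0" "c > 0" "s' > 0" "c' > 0" and "s + c = s' + c'"
  shows "F (s + h) c - F s c = F (s' + h) c' - F s' c'"
proof -
  txt \<open>For \<open>0 < a < s\<close> the \<open>H\<close>-terms cancel and the increment becomes
    \<open>G (a + h) (s + c - a) - G a (s + c - a)\<close>, which only depends on \<open>s + c\<close>.\<close>
  define a where "a = min s s' / 2"
  have a: "0 < a" "a < s" "a < s'"
    using pos by (auto simp: a_def)
  have "F (s + h) c - F s c = G (a + h) (s - a + c) - G a (s - a + c)"
    using pex[of "a + h" "s - a" c] pex[of a "s - a" c] a pos by (simp add: algebra_simps)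
  moreover have "F (s' + h) c' - F s' c' = G (a + h) (s' - a + c') - G a (s' - a + c')"
    using pex[of "a + h" "s' - a" c'] pex[of a "s' - a" c'] a pos by (simp add: algebra_simps)
  ultimately show ?thesis
    using \<open>s + c = s' + c'\<close> by (simp add: algebra_simps)
qed

lemma pexider_decomposition:
  fixes F G H :: "real \<Rightarrow> real \<Rightarrow> real"
  assumes pex: "\<And>a b c. a > 0 \<Longrightarrow> b > 0 \<Longrightarrow> c > 0 \<Longrightarrow> F (a + b) c = G a (b + c) + H b c"
    and "s > 0" "c > 0" "s + c > 1"
  shows "F s c = F (s + c - 1) 1 + (F 2 c - F (c + 1) 1)"
proof -
  consider "s < 2" | "s = 2" | "s > 2"
    by linarith
  then show ?thesis
  proof cases
    case 1
    then have "F (s + (2 - s)) c - F s c = F (s + c - 1 + (2 - s)) 1 - F (s + c - 1) 1"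
      using assms by (intro pexider_increment_invariant[of F G H, OF pex]) auto
    then show ?thesis
      by (simp add: algebra_simps)
  next
    case 3
    then have "F (2 + (s - 2)) c - F 2 c = F (c + 1 + (s - 2)) 1 - F (c + 1) 1"
      using assms by (intro pexider_increment_invariant[of F G H, OF pex]) auto
    then show ?thesis
      by (simp add: algebra_simps)
  qed (simp add: add.commute)
qed

lemma affine_if_scaling_defect:
  fixes K m :: "real \<Rightarrow> real"
  assumes scale: "\<And>t z. t \<ge> 1 \<Longrightarrow> z > 1 \<Longrightarrow> K (t * z) = t * K z + m t"
  obtains p r where "\<And>x. x \<ge> 2 \<Longrightarrow> K x = p * x + r"
proof -
  txt \<open>Computing \<open>K (4 * t)\<close> in two ways shows that the defect \<open>m\<close> is affine.\<close>
  have m_affine: "m t = (t - 1) * m 2" if "t \<ge> 1" for t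
  proof -
    have "K (t * 4) = t * (2 * K 2 + m 2) + m t"
      using scale[of t 4] scale[of 2 2] that by simp
    moreover have "K (t * 4) = 2 * (t * K 2 + m t) + m 2"
      using scale[of 2 "t * 2"] scale[of t 2] that by (simp add: mult.commute mult.left_commute)
    ultimately show ?thesis
      by (simp add: algebra_simps)
  qed
  show thesis
  proof (rule that)
    fix x :: real
    assume "x \<ge> 2"
    then have "K ((x / 2) * 2) = (x / 2) * K 2 + (x / 2 - 1) * m 2"
      using scale[of "x / 2" 2] m_affine[of "x / 2"] by simp
    then show "K x = (K 2 / 2 + m 2 / 2) * x + - m 2"
      by (simp add: algebra_simps)
  qed
qed

lemma homogeneous_linear_if_affine_slice:
  fixes F :: "real \<Rightarrow> real \<Rightarrow> real"
  assumes hom: "\<And>t s c. t > 0 \<Longrightarrow> s > 0 \<Longrightarrow> c > 0 \<Longrightarrow> F (t * s) (t * c) = t * F s c"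
    and slice: "\<And>s. s > 0 \<Longrightarrow> F s 2 = p * s + M"
    and "s > 0" "c > 0"
  shows "F s c = p * s + (M / 2) * c"
proof -
  define t where "t = 2 / c"
  have "t > 0" "t * c = 2"
    using \<open>c > 0\<close> by (simp_all add: t_def)
  then have "t * F s c = p * (t * s) + M"
    using hom[of t s c] slice[of "t * s"] \<open>s > 0\<close> \<open>c > 0\<close> by simp
  then show ?thesis
    using \<open>t > 0\<close> \<open>c > 0\<close> by (simp add: t_def field_simps)
qed

lemma homogeneous_pexider_linear:
  fixes F G H :: "real \<Rightarrow> real \<Rightarrow> real"
  assumes hom: "\<And>t s c. t > 0 \<Longrightarrow> s > 0 \<Longrightarrow> c > 0 \<Longrightarrow> F (t * s) (t * c) = t * F s c"
    and pex: "\<And>a b c. a > 0 \<Longrightarrow> b > 0 \<Longrightarrow> c > 0 \<Longrightarrow> F (a + b) c = G a (b + c) + H b c"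
  obtains p q where "\<And>s c. s > 0 \<Longrightarrow> c > 0 \<Longrightarrow> F s c = p * s + q * c"
proof -
  define K where "K z = F (z - 1) 1" for z
  define L where "L c = F 2 c - F (c + 1) 1" for c
  have decomp: "F s c = K (s + c) + L c" if "s > 0" "c > 0" "s + c > 1" for s c
    using pexider_decomposition[of F G H, OF pex that] by (simp add: K_def L_def)
  have scale: "K (t * z) = t * K z + - L t" if "t \<ge> 1" "z > 1" for t z
  proof -
    have "z \<le> t * z"
      using that by simp
    moreover have eq: "t * (z - 1) + t = t * z"
      by (simp add: algebra_simps)
    ultimately have "1 < t * (z - 1) + t"
      using that by linarith
    moreover have "0 < t * (z - 1)" "0 < t"
      using that by simp_all
    ultimately have "F (t * (z - 1)) t = K (t * z) + L t"
      using decomp[of "t * (z - 1)" t] unfolding eq by blast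
    moreover have "F (t * (z - 1)) (t * 1) = t * K z"
      using that hom[of t "z - 1" 1] by (simp add: K_def)
    ultimately show ?thesis
      by simp
  qed
  obtain p r where K_affine: "\<And>x. x \<ge> 2 \<Longrightarrow> K x = p * x + r"
    using affine_if_scaling_defect[of K "\<lambda>t. - L t", OF scale] by blast
  have slice: "F s 2 = p * s + (2 * p + r + L 2)" if "s > 0" for s
    using decomp[of s 2] K_affine[of "s + 2"] that by (simp add: algebra_simps)
  show thesis
    using homogeneous_linear_if_affine_slice[of F, OF hom slice] by (rule that)
qed

section \<open>The functional equation\<close>

locale divergence_equation =
  fixes B :: "real \<Rightarrow> real \<Rightarrow> real"
  assumes feq: "\<And>x y u v. x \<in> {0<..<1} \<Longrightarrow> y \<in> {0<..<1} \<Longrightarrow> u \<in> {0<..<1} \<Longrightarrow>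
             v \<in> {0<..<1} \<Longrightarrow> x + u \<in> {0<..<1} \<Longrightarrow> y + v \<in> {0<..<1} \<Longrightarrow>
             B x y + (1 - x) * B (u / (1 - x)) (v / (1 - y))
               = B u v + (1 - u) * B (x / (1 - u)) (y / (1 - v))"
    and sym: "\<And>x y. x \<in> {0<..<1} \<Longrightarrow> y \<in> {0<..<1} \<Longrightarrow> B x y = B (1 - x) (1 - y)"
    and diag: "\<And>x. x \<in> {0<..<1} \<Longrightarrow> B x x = 0"
begin

text \<open>\<open>persp a \<alpha> b \<beta>\<close> extends \<open>B\<close> homogeneously to the unnormalised pairs of weights
  \<open>(a, b)\<close> and \<open>(\<alpha>, \<beta>)\<close>; in these terms the functional equation loses its denominators.\<close>
definition persp :: "real \<Rightarrow> real \<Rightarrow> real \<Rightarrow> real \<Rightarrow> real"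
  where "persp a \<alpha> b \<beta> = (a + b) * B (a / (a + b)) (\<alpha> / (\<alpha> + \<beta>))"

lemma persp_fundamental:
  assumes "a > 0" "b > 0" "c > 0" "\<alpha> > 0" "\<beta> > 0" "\<gamma> > 0"
  shows "persp a \<alpha> (b + c) (\<beta> + \<gamma>) + persp b \<beta> c \<gamma> = persp b \<beta> (a + c) (\<alpha> + \<gamma>) + persp a \<alpha> c \<gamma>"
proof -
  define T \<Gamma> where "T = a + b + c" and "\<Gamma> = \<alpha> + \<beta> + \<gamma>"
  define x y u v where "x = a / T" and "y = \<alpha> / \<Gamma>" and "u = b / T" and "v = \<beta> / \<Gamma>"
  have "T > 0" "\<Gamma> > 0"
    using assms by (simp_all add: T_def \<Gamma>_def)
  have in01: "x \<in> {0<..<1}" "y \<in> {0<..<1}" "u \<in> {0<..<1}" "v \<in> {0<..<1}"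
      "x + u \<in> {0<..<1}" "y + v \<in> {0<..<1}"
    using assms unfolding x_def y_def u_def v_def T_def \<Gamma>_def add_divide_distrib[symmetric]
    by (auto intro!: divide_in_unit_interval)
  have "1 - x = (b + c) / T" "1 - u = (a + c) / T" "1 - y = (\<beta> + \<gamma>) / \<Gamma>" "1 - v = (\<alpha> + \<gamma>) / \<Gamma>"
    using \<open>T > 0\<close> \<open>\<Gamma> > 0\<close> by (simp_all add: x_def y_def u_def v_def T_def \<Gamma>_def field_simps)
  then have ratios: "u / (1 - x) = b / (b + c)" "v / (1 - y) = \<beta> / (\<beta> + \<gamma>)"
      "x / (1 - u) = a / (a + c)" "y / (1 - v) = \<alpha> / (\<alpha> + \<gamma>)"
      "T * (1 - x) = b + c" "T * (1 - u) = a + c"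
    using assms \<open>T > 0\<close> \<open>\<Gamma> > 0\<close> by (simp_all add: x_def y_def u_def v_def)
  have "persp a \<alpha> (b + c) (\<beta> + \<gamma>) = T * B x y" "persp b \<beta> (a + c) (\<alpha> + \<gamma>) = T * B u v"
    by (simp_all add: persp_def x_def y_def u_def v_def T_def \<Gamma>_def ac_simps)
  moreover have "persp b \<beta> c \<gamma> = T * (1 - x) * B (u / (1 - x)) (v / (1 - y))"
      "persp a \<alpha> c \<gamma> = T * (1 - u) * B (x / (1 - u)) (y / (1 - v))"
    unfolding ratios persp_def by simp_all
  moreover have "T * (B x y + (1 - x) * B (u / (1 - x)) (v / (1 - y)))
      = T * (B u v + (1 - u) * B (x / (1 - u)) (y / (1 - v)))"
    using feq[OF in01] by simp
  ultimately show ?thesis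
    by (simp add: distrib_left mult.assoc)
qed

lemma persp_commute:
  assumes "a > 0" "b > 0" "\<alpha> > 0" "\<beta> > 0"
  shows "persp a \<alpha> b \<beta> = persp b \<beta> a \<alpha>"
proof -
  have "1 - a / (a + b) = b / (b + a)" "1 - \<alpha> / (\<alpha> + \<beta>) = \<beta> / (\<beta> + \<alpha>)"
    using assms by (simp_all add: field_simps)
  then show ?thesis
    using sym[of "a / (a + b)" "\<alpha> / (\<alpha> + \<beta>)"] assms by (simp add: persp_def add.commute)
qed

lemma persp_cocycle:
  assumes "a > 0" "b > 0" "c > 0" "\<alpha> > 0" "\<beta> > 0" "\<gamma> > 0"
  shows "persp a \<alpha> b \<beta> + persp (a + b) (\<alpha> + \<beta>) c \<gamma> = persp a \<alpha> (b + c) (\<beta> + \<gamma>) + persp b \<beta> c \<gamma>"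
proof -
  have "persp c \<gamma> (b + a) (\<beta> + \<alpha>) + persp b \<beta> a \<alpha> = persp b \<beta> (c + a) (\<gamma> + \<alpha>) + persp c \<gamma> a \<alpha>"
    using persp_fundamental[of c b a \<gamma> \<beta> \<alpha>] assms by simp
  moreover have "persp a \<alpha> (b + c) (\<beta> + \<gamma>) + persp b \<beta> c \<gamma> = persp b \<beta> (a + c) (\<alpha> + \<gamma>) + persp a \<alpha> c \<gamma>"
    using persp_fundamental[of a b c \<alpha> \<beta> \<gamma>] assms by simp
  moreover have "persp (a + b) (\<alpha> + \<beta>) c \<gamma> = persp c \<gamma> (b + a) (\<beta> + \<alpha>)"
      "persp a \<alpha> b \<beta> = persp b \<beta> a \<alpha>" "persp c \<gamma> a \<alpha> = persp a \<alpha> c \<gamma>"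
    using persp_commute assms by (simp_all add: add.commute)
  ultimately show ?thesis
    by (simp add: add.commute)
qed

lemma persp_scale:
  assumes "t > 0" "s > 0" "c > 0"
  shows "persp (t * s) \<alpha> (t * c) \<beta> = t * persp s \<alpha> c \<beta>"
proof -
  have "t * s + t * c = t * (s + c)"
    by (simp add: algebra_simps)
  then show ?thesis
    using assms by (simp add: persp_def)
qed

lemma B_affine_in_first:
  assumes "y \<in> {0<..<1}"
  obtains p q where "\<And>x. x \<in> {0<..<1} \<Longrightarrow> B x y - B x (1/2) = p * x + q * (1 - x)"
proof -
  define g where "g = (1 - y) / y"
  have "g > 0" "1 / (1 + g) = y"
    using assms by (simp_all add: g_def field_simps)
  txt \<open>For fixed second weights the difference of two instances of the cocycle equation is a
    Pexider equation in the first weights.\<close>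
  define F where "F s c = persp s 1 c g - persp s 1 c 1" for s c
  define G where "G a t = persp a (1/2) t (1/2 + g) - persp a (1/2) t (3/2)" for a t
  define H where "H b c = persp b (1/2) c g - persp b (1/2) c 1" for b c
  have "F (t * s) (t * c) = t * F s c" if "t > 0" "s > 0" "c > 0" for t s c
    using that by (simp add: F_def persp_scale right_diff_distrib)
  moreover have "F (a + b) c = G a (b + c) + H b c" if "a > 0" "b > 0" "c > 0" for a b c
    using that persp_cocycle[of a b c "1/2" "1/2" g] persp_cocycle[of a b c "1/2" "1/2" 1] \<open>g > 0\<close>
    by (simp add: F_def G_def H_def)
  ultimately obtain p q where pq: "\<And>s c. s > 0 \<Longrightarrow> c > 0 \<Longrightarrow> F s c = p * s + q * c"
    using homogeneous_pexider_linear[of F G H] by blast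
  show thesis
  proof (rule that)
    fix x :: real
    assume "x \<in> {0<..<1}"
    then show "B x y - B x (1/2) = p * x + q * (1 - x)"
      using pq[of x "1 - x"] \<open>1 / (1 + g) = y\<close> by (simp add: F_def persp_def)
  qed
qed

lemma B_difference_form:
  obtains A C where "\<And>x y. x \<in> {0<..<1} \<Longrightarrow> y \<in> {0<..<1} \<Longrightarrow> B x y = (A y - A x) * x + C y - C x"
proof -
  have "\<forall>y. \<exists>p q. y \<in> {0<..<1} \<longrightarrow> (\<forall>x\<in>{0<..<1}. B x y - B x (1/2) = p * x + q * (1 - x))"
    using B_affine_in_first by metis
  then obtain p q where pq: "\<And>x y. x \<in> {0<..<1} \<Longrightarrow> y \<in> {0<..<1} \<Longrightarrow>
      B x y - B x (1/2) = p y * x + q y * (1 - x)"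
    by metis
  have half: "B x (1/2) = - (p x - q x) * x - q x" if "x \<in> {0<..<1}" for x
    using pq[OF that that] diag[OF that] by (simp add: algebra_simps)
  show thesis
  proof (rule that[of "\<lambda>y. p y - q y" q])
    fix x y :: real
    assume "x \<in> {0<..<1}" "y \<in> {0<..<1}"
    then show "B x y = (p y - q y - (p x - q x)) * x + q y - q x"
      using pq[of x y] half[of x] by (simp add: algebra_simps)
  qed
qed

lemma difference_form_rescaled:
  fixes A C :: "real \<Rightarrow> real"
  assumes repr: "\<And>x y. x \<in> {0<..<1} \<Longrightarrow> y \<in> {0<..<1} \<Longrightarrow> B x y = (A y - A x) * x + C y - C x"
    and "x < 1" "u / (1 - x) \<in> {0<..<1}" "z \<in> {0<..<1}"
  shows "(1 - x) * B (u / (1 - x)) z = (A z - A (u / (1 - x))) * u + (1 - x) * (C z - C (u / (1 - x)))"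
proof -
  have ring: "(1 - x) * ((a - b) * w + c - d) = (a - b) * ((1 - x) * w) + (1 - x) * (c - d)"
    for a b c d w x :: real
    by (simp add: algebra_simps)
  have cancel: "(1 - x) * (u / (1 - x)) = u"
    using \<open>x < 1\<close> by simp
  show ?thesis
    unfolding repr[OF assms(3,4)] ring cancel ..
qed

lemma difference_form_defect_constant:
  fixes A C :: "real \<Rightarrow> real"
  assumes repr: "\<And>x y. x \<in> {0<..<1} \<Longrightarrow> y \<in> {0<..<1} \<Longrightarrow> B x y = (A y - A x) * x + C y - C x"
  obtains P where "\<And>y v. y \<in> {0<..<1} \<Longrightarrow> v \<in> {0<..<1} \<Longrightarrow> y + v \<in> {0<..<1} \<Longrightarrow>
      A y - C (v / (1 - y)) - A (y / (1 - v)) = P"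
proof -
  define X where "X x u = x * A x + C x + u * A (u / (1 - x)) + (1 - x) * C (u / (1 - x))" for x u
  txt \<open>After substituting the difference form, the functional equation is affine in \<open>(x, u)\<close>
    up to the terms \<open>X\<close>; comparing \<open>(x, u) = (1/2, 1/4)\<close> with \<open>(1/4, 1/4)\<close> isolates the
    coefficient of \<open>x\<close>, which is the defect.\<close>
  have expand: "x * A y + u * A (v / (1 - y)) + C y + (1 - x) * C (v / (1 - y)) - X x u
      = u * A v + x * A (y / (1 - v)) + C v + (1 - u) * C (y / (1 - v)) - X u x"
    if x: "x \<in> {0<..<1}" "u \<in> {0<..<1}" "x + u \<in> {0<..<1}"
      and y: "y \<in> {0<..<1}" "v \<in> {0<..<1}" "y + v \<in> {0<..<1}" for x u y v
  proof -
    have in01: "u / (1 - x) \<in> {0<..<1}" "x / (1 - u) \<in> {0<..<1}"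
        "v / (1 - y) \<in> {0<..<1}" "y / (1 - v) \<in> {0<..<1}"
      using x y by (auto intro!: divide_in_unit_interval)
    have L: "(1 - x) * B (u / (1 - x)) (v / (1 - y))
        = (A (v / (1 - y)) - A (u / (1 - x))) * u + (1 - x) * (C (v / (1 - y)) - C (u / (1 - x)))"
      and R: "(1 - u) * B (x / (1 - u)) (y / (1 - v))
        = (A (y / (1 - v)) - A (x / (1 - u))) * x + (1 - u) * (C (y / (1 - v)) - C (x / (1 - u)))"
      using x in01 by (auto intro!: difference_form_rescaled[OF repr])
    have "x * A y + u * A (v / (1 - y)) + C y + (1 - x) * C (v / (1 - y)) - X x u
        = B x y + (1 - x) * B (u / (1 - x)) (v / (1 - y))"
      unfolding L repr[OF x(1) y(1)] X_def by (simp add: algebra_simps)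
    also have "\<dots> = B u v + (1 - u) * B (x / (1 - u)) (y / (1 - v))"
      by (rule feq[OF x(1) y(1) x(2) y(2) x(3) y(3)])
    also have "\<dots> = u * A v + x * A (y / (1 - v)) + C v + (1 - u) * C (y / (1 - v)) - X u x"
      unfolding R repr[OF x(2) y(2)] X_def by (simp add: algebra_simps)
    finally show ?thesis .
  qed
  show thesis
  proof (rule that)
    fix y v :: real
    assume "y \<in> {0<..<1}" "v \<in> {0<..<1}" "y + v \<in> {0<..<1}"
    then show "A y - C (v / (1 - y)) - A (y / (1 - v)) = 4 * (X (1/2) (1/4) - X (1/4) (1/2))"
      using expand[of "1/2" "1/4" y v] expand[of "1/4" "1/4" y v] by (simp add: algebra_simps)
  qed
qed

lemma B_cocycle_form:
  obtains A C :: "real \<Rightarrow> real"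
  where "\<And>x y. x \<in> {0<..<1} \<Longrightarrow> y \<in> {0<..<1} \<Longrightarrow> B x y = (A y - A x) * x + C y - C x"
    and "\<And>y v. y \<in> {0<..<1} \<Longrightarrow> v \<in> {0<..<1} \<Longrightarrow> y + v \<in> {0<..<1} \<Longrightarrow>
      A (y / (1 - v)) - A y = - C (v / (1 - y))"
proof -
  obtain A C where repr: "\<And>x y. x \<in> {0<..<1} \<Longrightarrow> y \<in> {0<..<1} \<Longrightarrow> B x y = (A y - A x) * x + C y - C x"
    using B_difference_form by blast
  obtain P where P: "\<And>y v. y \<in> {0<..<1} \<Longrightarrow> v \<in> {0<..<1} \<Longrightarrow> y + v \<in> {0<..<1} \<Longrightarrow>
      A y - C (v / (1 - y)) - A (y / (1 - v)) = P"
    using difference_form_defect_constant[OF repr] by blast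
  show thesis
  proof (rule that[of A "\<lambda>w. C w + P"])
    show "B x y = (A y - A x) * x + (C y + P) - (C x + P)" if "x \<in> {0<..<1}" "y \<in> {0<..<1}" for x y
      using repr[OF that] by simp
    show "A (y / (1 - v)) - A y = - (C (v / (1 - y)) + P)"
      if "y \<in> {0<..<1}" "v \<in> {0<..<1}" "y + v \<in> {0<..<1}" for y v
      using P[OF that] by simp
  qed
qed

end

lemma measurable_difference_form_coefficient:
  fixes A C :: "real \<Rightarrow> real" and B :: "real \<Rightarrow> real \<Rightarrow> real"
  assumes meas: "\<And>x. x \<in> {0<..<1} \<Longrightarrow> (\<lambda>y. B x y) \<in> borel_measurable (lebesgue_on {0<..<1})"
    and repr: "\<And>x y. x \<in> {0<..<1} \<Longrightarrow> y \<in> {0<..<1} \<Longrightarrow> B x y = (A y - A x) * x + C y - C x"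
  shows "A \<in> borel_measurable (lebesgue_on {0<..<1})"
proof -
  define k where "k = 2 * A (1/2) - A (1/4) + 4 * C (1/2) - 4 * C (1/4)"
  have "A y = 4 * (B (1/2) y - B (1/4) y) + k" if "y \<in> {0<..<1}" for y
    using repr[of "1/2" y] repr[of "1/4" y] that by (simp add: k_def algebra_simps)
  moreover have "(\<lambda>y. 4 * (B (1/2) y - B (1/4) y) + k) \<in> borel_measurable (lebesgue_on {0<..<1})"
    using meas[of "1/2"] meas[of "1/4"] by measurable
  ultimately show ?thesis
    by (subst measurable_cong[where g = "\<lambda>y. 4 * (B (1/2) y - B (1/4) y) + k"]) simp_all
qed

theorem mainTheorem8:
  fixes B :: "real \<Rightarrow> real \<Rightarrow> real"
  assumes meas1: "\<And>y. y \<in> {0<..<1} \<Longrightarrow>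
             (\<lambda>x. B x y) \<in> borel_measurable (restrict_space lebesgue {0<..<1})"
    and meas2: "\<And>x. x \<in> {0<..<1} \<Longrightarrow>
             (\<lambda>y. B x y) \<in> borel_measurable (restrict_space lebesgue {0<..<1})"
    and feq: "\<And>x y u v. x \<in> {0<..<1} \<Longrightarrow> y \<in> {0<..<1} \<Longrightarrow> u \<in> {0<..<1} \<Longrightarrow>
             v \<in> {0<..<1} \<Longrightarrow> x + u \<in> {0<..<1} \<Longrightarrow> y + v \<in> {0<..<1} \<Longrightarrow>
             B x y + (1 - x) * B (u / (1 - x)) (v / (1 - y))
               = B u v + (1 - u) * B (x / (1 - u)) (y / (1 - v))"
    and sym: "\<And>x y. x \<in> {0<..<1} \<Longrightarrow> y \<in> {0<..<1} \<Longrightarrow> B x y = B (1 - x) (1 - y)"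
    and diag: "\<And>x. x \<in> {0<..<1} \<Longrightarrow> B x x = 0"
  shows "\<exists>c::real. \<forall>x\<in>{0<..<1}. \<forall>y\<in>{0<..<1}.
           B x y = c * (x * ln (x / y) + (1 - x) * ln ((1 - x) / (1 - y)))"
proof -
  interpret divergence_equation B
    using feq sym diag by unfold_locales
  obtain A C :: "real \<Rightarrow> real"
    where repr: "\<And>x y. x \<in> {0<..<1} \<Longrightarrow> y \<in> {0<..<1} \<Longrightarrow> B x y = (A y - A x) * x + C y - C x"
      and key: "\<And>y v. y \<in> {0<..<1} \<Longrightarrow> v \<in> {0<..<1} \<Longrightarrow> y + v \<in> {0<..<1} \<Longrightarrow>
        A (y / (1 - v)) - A y = - C (v / (1 - y))"
    using B_cocycle_form by blast
  txt \<open>Measurability in the second variable suffices.\<close>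
  have "A \<in> borel_measurable (lebesgue_on {0<..<1})"
    by (rule measurable_difference_form_coefficient[OF meas2 repr])
  then obtain \<kappa> where A: "\<And>y. y \<in> {0<..<1} \<Longrightarrow> A y = A (1/2) + \<kappa> * logit y"
      and C: "\<And>w. w \<in> {0<..<1} \<Longrightarrow> C w = \<kappa> * ln (1 - w)"
    using logit_cocycle_measurable_solution[OF _ key] by blast
  show ?thesis
  proof (intro exI[of _ "- \<kappa>"] ballI)
    fix x y :: real
    assume x: "x \<in> {0<..<1}" and y: "y \<in> {0<..<1}"
    have "B x y = (A y - A x) * x + C y - C x"
      by (rule repr[OF x y])
    also have "\<dots> = - \<kappa> * (x * ln (x / y) + (1 - x) * ln ((1 - x) / (1 - y)))"
      using x y by (simp add: A[OF x] A[OF y] C[OF x] C[OF y] logit_def ln_div algebra_simps)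
    finally show "B x y = - \<kappa> * (x * ln (x / y) + (1 - x) * ln ((1 - x) / (1 - y)))" .
  qed
qed

end
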